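(* Let $n \ge 1$, $0 \le k \le n$, $0 \le \ell \le n-k$, $k \le m \le n-\ell$ be integers. For $1\le i\le n+1$ let $T(n;i,k,\ell,m)$ denote the number of rooted trees on the vertex set $[n+1]=\{1,\ldots,n+1\}$ in which the root is $i$, the root has exactly $k$ children smaller than $i$ and exactly $\ell$ children larger than $i$, and the subtrees hanging from the children smaller than $i$ contain in total $m$ vertices (so the subtrees hanging from the children larger than $i$ contain in total $n-m$ vertices). Then $$\sum_{i=1}^{n+1} T(n;i,k,\ell,m) \;=\; \binom{n+1}{k+\ell+1}\binom{n-k-\ell}{m-k}\,\phi_{m,k}\,\phi_{n-m,\ell},$$ where for integers $M,j\ge 0$, $$\phi_{M,j} = \begin{cases} 1 & \text{if } M=j=0,\\ j\,M^{M-j-1} & \text{if } M\ge 1 \text{ and } 0\le j\le M,\\ 0 & \text{if } j>M.\end{cases}$$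
   Context: A rooted tree on a vertex set $V$ is a tree with vertex set $V$ together with a distinguished vertex (the root). Removing the root from a rooted tree leaves a forest of rooted trees whose roots are the children of the root; the "subtrees hanging from" a set of children are the components of this forest rooted at those children. Vertices are compared by their integer labels. ($\phi_{M,j}$ is the number of rooted forests on $M$ labeled vertices with $j$ specified roots.) *)

theory Defs
  imports Complex_Main
begin

definition adj :: "nat set set \<Rightarrow> nat \<Rightarrow> nat \<Rightarrow> bool" where
  "adj E a b \<longleftrightarrow> a \<noteq> b \<and> {a, b} \<in> E"

definition is_graph :: "nat set \<Rightarrow> nat set set \<Rightarrow> bool" where
  "is_graph V E \<longleftrightarrow> (\<forall>e\<in>E. \<exists>a b. a \<noteq> b \<and> a \<in> V \<and> b \<in> V \<and> e = {a, b})"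

definition connected_graph :: "nat set \<Rightarrow> nat set set \<Rightarrow> bool" where
  "connected_graph V E \<longleftrightarrow> (\<forall>u\<in>V. \<forall>v\<in>V. (adj E)\<^sup>*\<^sup>* u v)"

text \<open>Acyclic: no edge lies on a cycle, i.e. the endpoints of any edge are
  not connected once that edge is removed.\<close>
definition acyclic_graph :: "nat set set \<Rightarrow> bool" where
  "acyclic_graph E \<longleftrightarrow> (\<forall>a b. a \<noteq> b \<and> {a, b} \<in> E \<longrightarrow> \<not> (adj (E - {{a, b}}))\<^sup>*\<^sup>* a b)"

definition is_tree :: "nat set \<Rightarrow> nat set set \<Rightarrow> bool" where
  "is_tree V E \<longleftrightarrow> is_graph V E \<and> connected_graph V E \<and> acyclic_graph E"

definition children :: "nat set set \<Rightarrow> nat \<Rightarrow> nat set" where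
  "children E r = {c. adj E r c}"

definition hanging_vertices :: "nat set set \<Rightarrow> nat \<Rightarrow> nat set \<Rightarrow> nat set" where
  "hanging_vertices E r C = {v. \<exists>c\<in>C. (adj {e\<in>E. r \<notin> e})\<^sup>*\<^sup>* c v}"

text \<open>T(n;i,k,l,m): rooted trees on [n+1] with root i (a rooted tree with root i is
  identified with its edge set).\<close>
definition T :: "nat \<Rightarrow> nat \<Rightarrow> nat \<Rightarrow> nat \<Rightarrow> nat \<Rightarrow> nat" where
  "T n i k l m = card {E. is_tree {1..n+1} E
      \<and> card {c\<in>children E i. c < i} = k
      \<and> card {c\<in>children E i. c > i} = l
      \<and> card (hanging_vertices E i {c\<in>children E i. c < i}) = m}"

definition phi :: "nat \<Rightarrow> nat \<Rightarrow> real" where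
  "phi M j = (if M = 0 \<and> j = 0 then 1
              else if 1 \<le> M \<and> j \<le> M then real j * (real M) powi (int M - int j - 1)
              else 0)"

end

theory Submission
  imports Defs
begin

text \<open>Deleting the root \<open>x\<close> of a tree on \<open>V\<close> leaves a rooted forest on \<open>V - {x}\<close> whose roots
  are the children of \<open>x\<close>, so the trees rooted at \<open>x\<close> with a prescribed set \<open>C\<close> of \<open>j\<close> children
  number \<open>\<phi>(|V| - 1, j)\<close>. This is proved by induction: contracting the edge from \<open>x\<close> to a
  child \<open>r \<in> C\<close> is a bijection onto the pairs \<open>(D, T')\<close> where \<open>D\<close> (the other children of
  \<open>r\<close>) avoids \<open>C\<close> and \<open>T'\<close> is a tree on \<open>V - {r}\<close> rooted at \<open>x\<close> with children
  \<open>C - {r} \<union> D\<close>; the resulting binomial recurrence is satisfied by \<open>\<phi>\<close>.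

  A tree rooted at \<open>i\<close> whose children below \<open>i\<close> form \<open>Cs\<close>, with hanging vertex set \<open>S\<close>, and
  whose children above \<open>i\<close> form \<open>Cl\<close>, is the same as a pair of trees rooted at \<open>i\<close>: one on
  \<open>{i} \<union> S\<close> with children \<open>Cs\<close> and one on the complement of \<open>S\<close> with children \<open>Cl\<close>.
  Hence \<open>T(n; i, k, l, m)\<close> is the number of choices of \<open>(Cs, Cl, S)\<close>, namely
  \<open>C(i-1, k) C(n+1-i, l) C(n-k-l, m-k)\<close>, times \<open>\<phi>(m, k) \<phi>(n-m, l)\<close>, and summing over \<open>i\<close> is
  the upper Vandermonde identity.\<close>

section \<open>Graphs and reachability\<close>

abbreviation avoiding :: "nat set set \<Rightarrow> nat \<Rightarrow> nat set set" where
  "avoiding E x \<equiv> {e\<in>E. x \<notin> e}"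

lemma adj_sym: "adj E a b \<longleftrightarrow> adj E b a"
  unfolding adj_def by (auto simp: insert_commute)

lemma rtranclp_adj_sym: "(adj E)\<^sup>*\<^sup>* a b \<Longrightarrow> (adj E)\<^sup>*\<^sup>* b a"
  by (metis adj_sym symp_rtranclp sympD sympI)

lemma adj_mono: "E \<subseteq> E' \<Longrightarrow> adj E a b \<Longrightarrow> adj E' a b"
  unfolding adj_def by auto

lemma rtranclp_adj_mono: "E \<subseteq> E' \<Longrightarrow> (adj E)\<^sup>*\<^sup>* a b \<Longrightarrow> (adj E')\<^sup>*\<^sup>* a b"
  by (metis adj_mono mono_rtranclp)

lemma rtranclp_map:
  assumes "\<And>u w. R u w \<Longrightarrow> S\<^sup>*\<^sup>* (f u) (f w)"
  shows "R\<^sup>*\<^sup>* a b \<Longrightarrow> S\<^sup>*\<^sup>* (f a) (f b)"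
proof (induction rule: rtranclp_induct)
  case (step y z)
  then show ?case using assms by (meson rtranclp_trans)
qed simp

lemma rtranclp_closed:
  assumes "R\<^sup>*\<^sup>* a b" "a \<in> Z" "\<And>u w. R u w \<Longrightarrow> u \<in> Z \<Longrightarrow> w \<in> Z"
  shows "b \<in> Z"
  using assms(1,2) by (induction rule: rtranclp_induct) (use assms(3) in blast)+

lemma rtranclp_lift:
  assumes "S\<^sup>*\<^sup>* a b" "P a a0" "P b b0"
    and step: "\<And>u w u0 w0. S u w \<Longrightarrow> P u u0 \<Longrightarrow> P w w0 \<Longrightarrow> R\<^sup>*\<^sup>* u0 w0"
    and ex: "\<And>u w. S u w \<Longrightarrow> \<exists>u0. P u u0"
    and same: "\<And>u u0 u1. P u u0 \<Longrightarrow> P u u1 \<Longrightarrow> R\<^sup>*\<^sup>* u0 u1"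
  shows "R\<^sup>*\<^sup>* a0 b0"
  using assms(1,3)
proof (induction arbitrary: b0 rule: rtranclp_induct)
  case (step y z)
  obtain y0 where y0: "P y y0" using ex[OF step.hyps(2)] by blast
  have "R\<^sup>*\<^sup>* a0 y0" using step.IH[OF y0] .
  moreover have "R\<^sup>*\<^sup>* y0 b0" using assms(4)[OF step.hyps(2) y0 step.prems] .
  ultimately show ?case by (rule rtranclp_trans)
qed (use same assms(2) in blast)

lemma graph_edgeE:
  assumes "is_graph V E" "e \<in> E"
  obtains a b where "a \<noteq> b" "a \<in> V" "b \<in> V" "e = {a, b}"
  using assms unfolding is_graph_def by metis

lemma is_graph_adjD: "is_graph V E \<Longrightarrow> adj E a b \<Longrightarrow> a \<in> V \<and> b \<in> V"
  unfolding adj_def is_graph_def by (auto simp: doubleton_eq_iff)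

lemma is_graph_Pow: "is_graph V E \<Longrightarrow> E \<subseteq> Pow V"
  unfolding is_graph_def by auto

lemma is_graph_subset: "is_graph V E \<Longrightarrow> E' \<subseteq> E \<Longrightarrow> is_graph V E'"
  unfolding is_graph_def by blast

lemma is_graph_restrict: "is_graph V E \<Longrightarrow> is_graph W {e\<in>E. e \<subseteq> W}"
  unfolding is_graph_def by (metis (mono_tags, lifting) insert_subset mem_Collect_eq)

lemma is_graph_Un:
  "is_graph V1 E1 \<Longrightarrow> is_graph V2 E2 \<Longrightarrow> V1 \<subseteq> V \<Longrightarrow> V2 \<subseteq> V \<Longrightarrow> is_graph V (E1 \<union> E2)"
  unfolding is_graph_def by (metis Un_iff subsetD)

lemma finite_trees: "finite V \<Longrightarrow> finite {E. is_tree V E}"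
  by (rule finite_subset[of _ "Pow (Pow V)"]) (auto simp: is_tree_def dest: is_graph_Pow)

lemma acyclic_graph_subset: "acyclic_graph E \<Longrightarrow> E' \<subseteq> E \<Longrightarrow> acyclic_graph E'"
  unfolding acyclic_graph_def by (meson Diff_mono order_refl rtranclp_adj_mono subsetD)

lemma connected_graphI:
  assumes "x \<in> V" "\<And>v. v \<in> V \<Longrightarrow> (adj E)\<^sup>*\<^sup>* v x"
  shows "connected_graph V E"
  unfolding connected_graph_def using assms by (meson rtranclp_adj_sym rtranclp_trans)

lemma children_subset: "is_graph V E \<Longrightarrow> children E x \<subseteq> V - {x}"
  unfolding children_def by (auto dest: is_graph_adjD simp: adj_def)

lemma children_Un: "children (E1 \<union> E2) x = children E1 x \<union> children E2 x"
  unfolding children_def adj_def by auto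

lemma root_notin_children: "x \<notin> children E x"
  unfolding children_def adj_def by simp

lemma children_restrict: "x \<in> W \<Longrightarrow> children {e\<in>E. e \<subseteq> W} x = children E x \<inter> W"
  unfolding children_def adj_def by auto

lemma rtranclp_avoiding_neq: "(adj (avoiding E x))\<^sup>*\<^sup>* c v \<Longrightarrow> c \<noteq> x \<Longrightarrow> v \<noteq> x"
  using rtranclp_closed[of "adj (avoiding E x)" c v "-{x}"] unfolding adj_def by auto

lemma root_notin_hanging_vertices: "x \<notin> C \<Longrightarrow> x \<notin> hanging_vertices E x C"
  unfolding hanging_vertices_def using rtranclp_avoiding_neq by blast

lemma subset_hanging_vertices: "C \<subseteq> hanging_vertices E x C"
  unfolding hanging_vertices_def by auto

lemma acyclic_children_eq:
  assumes ac: "acyclic_graph E" and xc: "adj E x c" and xc': "adj E x c'"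
    and p: "(adj (avoiding E x))\<^sup>*\<^sup>* c' c"
  shows "c = c'"
proof (rule ccontr)
  assume ne: "c \<noteq> c'"
  have "(adj (E - {{x,c}}))\<^sup>*\<^sup>* c' c"
    by (rule rtranclp_adj_mono[OF _ p]) auto
  moreover have "adj (E - {{x,c}}) x c'"
    using xc' ne xc unfolding adj_def by (auto simp: doubleton_eq_iff)
  ultimately have "(adj (E - {{x,c}}))\<^sup>*\<^sup>* x c"
    by (meson converse_rtranclp_into_rtranclp)
  then show False using ac xc unfolding acyclic_graph_def adj_def by blast
qed

lemma rtranclp_from_root:
  assumes "(adj E)\<^sup>*\<^sup>* x v"
  shows "v = x \<or> (\<exists>c\<in>children E x. (adj (avoiding E x))\<^sup>*\<^sup>* c v)"
  using assms
proof (induction rule: rtranclp_induct)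
  case (step y z)
  show ?case
  proof (cases "y = x \<or> z = x")
    case True
    then show ?thesis using step(2) unfolding children_def by auto
  next
    case False
    with step(3) obtain c where "c \<in> children E x" "(adj (avoiding E x))\<^sup>*\<^sup>* c y" by blast
    moreover have "adj (avoiding E x) y z" using step(2) False unfolding adj_def by auto
    ultimately show ?thesis by (meson rtranclp.rtrancl_into_rtrancl)
  qed
qed simp

lemma hanging_vertices_children:
  assumes "connected_graph V E" "x \<in> V" "v \<in> V" "v \<noteq> x"
  shows "v \<in> hanging_vertices E x (children E x)"
  using rtranclp_from_root[of E x v] assms unfolding connected_graph_def hanging_vertices_def
  by blast

lemma rtranclp_adj_Un_cut_vertex:
  assumes g1: "is_graph V1 E1" and g2: "is_graph V2 E2" and cut: "V1 \<inter> V2 \<subseteq> {x}"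
    and x: "x \<in> V1" and a: "a \<in> V1" and b: "b \<in> V1"
    and p: "(adj (E1 \<union> E2))\<^sup>*\<^sup>* a b"
  shows "(adj E1)\<^sup>*\<^sup>* a b"
proof -
  define \<pi> where "\<pi> v = (if v \<in> V1 then v else x)" for v
  have "(adj E1)\<^sup>*\<^sup>* (\<pi> u) (\<pi> w)" if "adj (E1 \<union> E2) u w" for u w
  proof (cases "{u,w} \<in> E1")
    case True
    then have "adj E1 u w" using that unfolding adj_def by auto
    then show ?thesis using is_graph_adjD[OF g1] unfolding \<pi>_def by auto
  next
    case False
    then have "adj E2 u w" using that unfolding adj_def by auto
    then have "\<pi> u = x" "\<pi> w = x" using is_graph_adjD[OF g2] cut unfolding \<pi>_def by auto
    then show ?thesis by simp
  qed
  from rtranclp_map[of _ _ \<pi>, OF this p] show ?thesis using a b unfolding \<pi>_def by simp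
qed

lemma acyclic_graph_Un_cut_vertex:
  assumes g1: "is_graph V1 E1" and g2: "is_graph V2 E2"
    and ac1: "acyclic_graph E1" and ac2: "acyclic_graph E2"
    and cut: "V1 \<inter> V2 \<subseteq> {x}" and x1: "x \<in> V1" and x2: "x \<in> V2"
  shows "acyclic_graph (E1 \<union> E2)"
proof -
  have no_bypass: "\<not> (adj (F1 \<union> F2 - {{a,b}}))\<^sup>*\<^sup>* a b"
    if "is_graph W1 F1" "is_graph W2 F2" "acyclic_graph F1" "W1 \<inter> W2 \<subseteq> {x}" "x \<in> W1"
      "a \<noteq> b" "{a,b} \<in> F1"
    for W1 W2 F1 F2 a b
  proof
    assume p: "(adj (F1 \<union> F2 - {{a,b}}))\<^sup>*\<^sup>* a b"
    have ab: "a \<in> W1" "b \<in> W1" using that(1,7) by (auto elim!: graph_edgeE simp: doubleton_eq_iff)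
    have "(adj ((F1 - {{a,b}}) \<union> F2))\<^sup>*\<^sup>* a b" by (rule rtranclp_adj_mono[OF _ p]) auto
    then have "(adj (F1 - {{a,b}}))\<^sup>*\<^sup>* a b"
      using rtranclp_adj_Un_cut_vertex[OF is_graph_subset[OF that(1)] that(2,4,5) ab] by blast
    then show False using that(3,6,7) unfolding acyclic_graph_def by blast
  qed
  show ?thesis
    unfolding acyclic_graph_def
  proof (intro allI impI)
    fix a b assume "a \<noteq> b \<and> {a, b} \<in> E1 \<union> E2"
    then show "\<not> (adj (E1 \<union> E2 - {{a, b}}))\<^sup>*\<^sup>* a b"
      using no_bypass[OF g1 g2 ac1 cut x1, of a b] no_bypass[OF g2 g1 ac2 _ x2, of a b] cut
      by (auto simp: Un_commute Int_commute)
  qed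
qed

section \<open>Splitting a tree at its root\<close>

definition rooted_trees :: "nat set \<Rightarrow> nat \<Rightarrow> nat set \<Rightarrow> nat set set set" where
  "rooted_trees V x C = {E. is_tree V E \<and> children E x = C}"

definition split_trees :: "nat set \<Rightarrow> nat \<Rightarrow> nat set \<Rightarrow> nat set \<Rightarrow> nat set \<Rightarrow> nat set set set" where
  "split_trees V x Cs Cl S =
     {E. is_tree V E \<and> children E x = Cs \<union> Cl \<and> hanging_vertices E x Cs = S}"

lemma finite_rooted_trees: "finite V \<Longrightarrow> finite (rooted_trees V x C)"
  unfolding rooted_trees_def by (rule finite_subset[OF _ finite_trees]) auto

context
  fixes V :: "nat set" and x :: nat and Cs Cl S :: "nat set"
  assumes xV: "x \<in> V" and CsS: "Cs \<subseteq> S" and SV: "S \<subseteq> V - {x} - Cl"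
begin

lemma split_trees_no_cross_edge:
  assumes E: "E \<in> split_trees V x Cs Cl S" and u: "u \<in> S" and w: "w \<notin> S" "w \<noteq> x"
  shows "{u,w} \<notin> E"
proof
  assume e: "{u,w} \<in> E"
  have hS: "hanging_vertices E x Cs = S" using E unfolding split_trees_def by auto
  from u obtain c where c: "c \<in> Cs" "(adj (avoiding E x))\<^sup>*\<^sup>* c u"
    using hS unfolding hanging_vertices_def by blast
  have "adj (avoiding E x) u w" using e u w SV unfolding adj_def by auto
  with c have "w \<in> hanging_vertices E x Cs"
    unfolding hanging_vertices_def by (blast intro: rtranclp.rtrancl_into_rtrancl)
  then show False using hS w by simp
qed

lemma split_trees_edges:
  assumes E: "E \<in> split_trees V x Cs Cl S"
  shows "{e\<in>E. e \<subseteq> insert x S} \<union> {e\<in>E. e \<subseteq> V - S} = E"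
proof -
  have g: "is_graph V E" using E unfolding split_trees_def is_tree_def by auto
  have "e \<subseteq> insert x S \<or> e \<subseteq> V - S" if e: "e \<in> E" for e
  proof -
    obtain a b where ab: "a \<in> V" "b \<in> V" "e = {a,b}" by (rule graph_edgeE[OF g e])
    then show ?thesis
      using split_trees_no_cross_edge[OF E, of a b] split_trees_no_cross_edge[OF E, of b a] e
      by (auto simp: insert_commute)
  qed
  then show ?thesis by auto
qed

lemma split_trees_inner:
  assumes E: "E \<in> split_trees V x Cs Cl S"
  shows "{e\<in>E. e \<subseteq> insert x S} \<in> rooted_trees (insert x S) x Cs"
proof -
  define E1 where "E1 = {e\<in>E. e \<subseteq> insert x S}"
  have tr: "is_tree V E" and hS: "hanging_vertices E x Cs = S" and ch: "children E x = Cs \<union> Cl"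
    using E unfolding split_trees_def by auto
  have g1: "is_graph (insert x S) E1" unfolding E1_def
    by (rule is_graph_restrict[of V]) (use tr in \<open>simp add: is_tree_def\<close>)
  have ac1: "acyclic_graph E1"
    using tr acyclic_graph_subset[of E E1] unfolding E1_def is_tree_def by auto
  have reach: "(adj E1)\<^sup>*\<^sup>* c w" if "c \<in> Cs" "(adj (avoiding E x))\<^sup>*\<^sup>* c w" for c w
    using that(2)
  proof (induction rule: rtranclp_induct)
    case (step y z)
    have "y \<in> S" "z \<in> S" using hS step.hyps that(1) unfolding hanging_vertices_def
      by (auto intro: rtranclp.rtrancl_into_rtrancl)
    then have "adj E1 y z" using step.hyps(2) unfolding E1_def adj_def by auto
    then show ?case using step.IH by (blast intro: rtranclp.rtrancl_into_rtrancl)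
  qed simp
  have con: "connected_graph (insert x S) E1"
  proof (rule connected_graphI[of x])
    fix v assume v: "v \<in> insert x S"
    show "(adj E1)\<^sup>*\<^sup>* v x"
    proof (cases "v = x")
      case False
      then obtain c where c: "c \<in> Cs" "(adj (avoiding E x))\<^sup>*\<^sup>* c v"
        using v hS unfolding hanging_vertices_def by blast
      have "adj E x c" using c(1) ch unfolding children_def by auto
      then have "adj E1 x c" using c(1) CsS unfolding E1_def adj_def by auto
      then have "(adj E1)\<^sup>*\<^sup>* x v" using reach[OF c] by (meson converse_rtranclp_into_rtranclp)
      then show ?thesis by (rule rtranclp_adj_sym)
    qed simp
  qed simp
  have "children E1 x = Cs"
    using children_restrict[of x "insert x S" E] root_notin_children[of x E] ch CsS SV
    unfolding E1_def by auto
  then show ?thesis using g1 ac1 con unfolding E1_def[symmetric] rooted_trees_def is_tree_def by simp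
qed

lemma split_trees_outer:
  assumes E: "E \<in> split_trees V x Cs Cl S"
  shows "{e\<in>E. e \<subseteq> V - S} \<in> rooted_trees (V - S) x Cl"
proof -
  define E2 where "E2 = {e\<in>E. e \<subseteq> V - S}"
  have ch: "children E x = Cs \<union> Cl"
    and g: "is_graph V E" and ac: "acyclic_graph E" and cn: "connected_graph V E"
    using E unfolding split_trees_def is_tree_def by auto
  have g2: "is_graph (V - S) E2" using is_graph_restrict[OF g] unfolding E2_def .
  have ac2: "acyclic_graph E2" using acyclic_graph_subset[OF ac] unfolding E2_def by auto
  have xS: "x \<notin> S" using SV by auto
  text \<open>Collapsing the inner part onto the root maps paths of the tree to paths of the outer part.\<close>
  define \<pi> where "\<pi> v = (if v \<in> S then x else v)" for v
  have step: "(adj E2)\<^sup>*\<^sup>* (\<pi> u) (\<pi> w)" if uw: "adj E u w" for u w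
  proof -
    have "u \<in> V" "w \<in> V" "{u,w} \<in> E" "{w,u} \<in> E" "u \<noteq> w"
      using is_graph_adjD[OF g uw] uw unfolding adj_def by (auto simp: insert_commute)
    then have "adj E2 u w \<or> (u \<in> S \<or> u = x) \<and> (w \<in> S \<or> w = x)"
      using split_trees_no_cross_edge[OF E, of u w] split_trees_no_cross_edge[OF E, of w u]
      unfolding E2_def adj_def by auto
    then show ?thesis unfolding \<pi>_def E2_def adj_def by (auto split: if_splits)
  qed
  have con: "connected_graph (V - S) E2"
    unfolding connected_graph_def
  proof (intro ballI)
    fix u v assume uv: "u \<in> V - S" "v \<in> V - S"
    then have "(adj E)\<^sup>*\<^sup>* u v" using cn unfolding connected_graph_def by auto
    from rtranclp_map[of "adj E" "adj E2" \<pi>, OF step this]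
    show "(adj E2)\<^sup>*\<^sup>* u v" using uv unfolding \<pi>_def by simp
  qed
  have "children E2 x = Cl"
    using children_restrict[of x "V - S" E] ch CsS SV children_subset[OF g, of x] xV xS
    unfolding E2_def by auto
  then show ?thesis using g2 ac2 con unfolding E2_def[symmetric] rooted_trees_def is_tree_def by simp
qed

lemma hanging_vertices_glue:
  assumes E1: "E1 \<in> rooted_trees (insert x S) x Cs" and g2: "is_graph (V - S) E2"
  shows "hanging_vertices (E1 \<union> E2) x Cs = S"
proof
  have g1: "is_graph (insert x S) E1" and c1: "connected_graph (insert x S) E1"
    and ch1: "children E1 x = Cs"
    using E1 unfolding rooted_trees_def is_tree_def by auto
  have step: "w \<in> S" if uw: "adj (avoiding (E1 \<union> E2) x) u w" and u: "u \<in> S" for u w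
  proof -
    have "adj E1 u w \<or> adj E2 u w" "w \<noteq> x" using uw unfolding adj_def by auto
    then show "w \<in> S" using is_graph_adjD[OF g1, of u w] is_graph_adjD[OF g2, of u w] u by blast
  qed
  show "hanging_vertices (E1 \<union> E2) x Cs \<subseteq> S"
  proof
    fix v assume "v \<in> hanging_vertices (E1 \<union> E2) x Cs"
    then obtain c where c: "c \<in> Cs" "(adj (avoiding (E1 \<union> E2) x))\<^sup>*\<^sup>* c v"
      unfolding hanging_vertices_def by blast
    have "c \<in> S" using c(1) CsS by blast
    from c(2) this step show "v \<in> S" by (rule rtranclp_closed)
  qed
  show "S \<subseteq> hanging_vertices (E1 \<union> E2) x Cs"
  proof
    fix v assume "v \<in> S"
    then have "v \<in> hanging_vertices E1 x Cs"
      using hanging_vertices_children[OF c1, of x v] SV ch1 by blast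
    then obtain c where "c \<in> Cs" "(adj (avoiding E1 x))\<^sup>*\<^sup>* c v"
      unfolding hanging_vertices_def by blast
    moreover have "avoiding E1 x \<subseteq> avoiding (E1 \<union> E2) x" by blast
    ultimately show "v \<in> hanging_vertices (E1 \<union> E2) x Cs"
      unfolding hanging_vertices_def using rtranclp_adj_mono by blast
  qed
qed

lemma glue_in_split_trees:
  assumes E1: "E1 \<in> rooted_trees (insert x S) x Cs" and E2: "E2 \<in> rooted_trees (V - S) x Cl"
  shows "E1 \<union> E2 \<in> split_trees V x Cs Cl S"
proof -
  have g1: "is_graph (insert x S) E1" and ac1: "acyclic_graph E1"
    and c1: "connected_graph (insert x S) E1" and ch1: "children E1 x = Cs"
    using E1 unfolding rooted_trees_def is_tree_def by auto
  have g2: "is_graph (V - S) E2" and ac2: "acyclic_graph E2"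
    and c2: "connected_graph (V - S) E2" and ch2: "children E2 x = Cl"
    using E2 unfolding rooted_trees_def is_tree_def by auto
  have xS: "x \<notin> S" using SV by auto
  have g: "is_graph V (E1 \<union> E2)" using is_graph_Un[OF g1 g2] SV xV by auto
  have ac: "acyclic_graph (E1 \<union> E2)"
    by (rule acyclic_graph_Un_cut_vertex[OF g1 g2 ac1 ac2, of x]) (use xS xV in auto)
  have con: "connected_graph V (E1 \<union> E2)"
  proof (rule connected_graphI[OF xV])
    fix v assume "v \<in> V"
    then have "(adj E1)\<^sup>*\<^sup>* v x \<or> (adj E2)\<^sup>*\<^sup>* v x"
      using c1 c2 xV xS unfolding connected_graph_def by blast
    then show "(adj (E1 \<union> E2))\<^sup>*\<^sup>* v x" by (meson rtranclp_adj_mono Un_upper1 Un_upper2)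
  qed
  show ?thesis
    using g ac con ch1 ch2 hanging_vertices_glue[OF E1 g2]
    unfolding split_trees_def is_tree_def by (simp add: children_Un)
qed

lemma restrict_glue:
  assumes E1: "E1 \<in> rooted_trees (insert x S) x Cs" and E2: "E2 \<in> rooted_trees (V - S) x Cl"
  shows "{e \<in> E1 \<union> E2. e \<subseteq> insert x S} = E1" "{e \<in> E1 \<union> E2. e \<subseteq> V - S} = E2"
proof -
  have g1: "is_graph (insert x S) E1" and g2: "is_graph (V - S) E2"
    using E1 E2 unfolding rooted_trees_def is_tree_def by auto
  have xS: "x \<notin> S" using SV by auto
  have E1_edge: "e \<subseteq> insert x S \<and> \<not> e \<subseteq> V - S" if e: "e \<in> E1" for e
  proof -
    obtain a b where "a \<noteq> b" "a \<in> insert x S" "b \<in> insert x S" "e = {a,b}"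
      by (rule graph_edgeE[OF g1 e])
    then show ?thesis using xS by auto
  qed
  have E2_edge: "e \<subseteq> V - S \<and> \<not> e \<subseteq> insert x S" if e: "e \<in> E2" for e
  proof -
    obtain a b where "a \<noteq> b" "a \<in> V - S" "b \<in> V - S" "e = {a,b}"
      by (rule graph_edgeE[OF g2 e])
    then show ?thesis by auto
  qed
  show "{e \<in> E1 \<union> E2. e \<subseteq> insert x S} = E1" "{e \<in> E1 \<union> E2. e \<subseteq> V - S} = E2"
    using E1_edge E2_edge by blast+
qed

lemma split_trees_bij:
  "bij_betw (\<lambda>E. ({e\<in>E. e \<subseteq> insert x S}, {e\<in>E. e \<subseteq> V - S}))
     (split_trees V x Cs Cl S) (rooted_trees (insert x S) x Cs \<times> rooted_trees (V - S) x Cl)"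
proof (rule bij_betw_byWitness[where f' = "\<lambda>(E1, E2). E1 \<union> E2"])
  show "\<forall>E\<in>split_trees V x Cs Cl S.
          (\<lambda>(E1, E2). E1 \<union> E2) ({e\<in>E. e \<subseteq> insert x S}, {e\<in>E. e \<subseteq> V - S}) = E"
    using split_trees_edges by auto
  show "\<forall>P\<in>rooted_trees (insert x S) x Cs \<times> rooted_trees (V - S) x Cl.
          (\<lambda>E. ({e\<in>E. e \<subseteq> insert x S}, {e\<in>E. e \<subseteq> V - S})) ((\<lambda>(E1, E2). E1 \<union> E2) P) = P"
    using restrict_glue by fastforce
  show "(\<lambda>E. ({e\<in>E. e \<subseteq> insert x S}, {e\<in>E. e \<subseteq> V - S})) ` split_trees V x Cs Cl S
          \<subseteq> rooted_trees (insert x S) x Cs \<times> rooted_trees (V - S) x Cl"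
    using split_trees_inner split_trees_outer by blast
  show "(\<lambda>(E1, E2). E1 \<union> E2) ` (rooted_trees (insert x S) x Cs \<times> rooted_trees (V - S) x Cl)
          \<subseteq> split_trees V x Cs Cl S"
    by (auto intro: glue_in_split_trees)
qed

end

section \<open>Contracting the edge between the root and one of its children\<close>

definition merge :: "nat \<Rightarrow> nat \<Rightarrow> nat \<Rightarrow> nat" where
  "merge x r v = (if v = r then x else v)"

definition contract_edge :: "nat \<Rightarrow> nat \<Rightarrow> nat set set \<Rightarrow> nat set set" where
  "contract_edge x r E = (\<lambda>e. merge x r ` e) ` (E - {{x,r}})"

text \<open>The inverse of \<^const>\<open>contract_edge\<close>: the edges from \<open>x\<close> to \<open>D\<close> are handed back to \<open>r\<close>.\<close>
definition expand_edge :: "nat \<Rightarrow> nat \<Rightarrow> nat set \<Rightarrow> nat set set \<Rightarrow> nat set set" where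
  "expand_edge x r D E' = (E' - (\<lambda>d. {x,d}) ` D) \<union> (\<lambda>d. {r,d}) ` D \<union> {{x,r}}"

lemma merge_neq: "a \<noteq> b \<Longrightarrow> {a,b} \<noteq> {x,r} \<Longrightarrow> x \<noteq> r \<Longrightarrow> merge x r a \<noteq> merge x r b"
  unfolding merge_def by (auto simp: doubleton_eq_iff)

lemma merge_eq: "merge x r a = merge x r b \<Longrightarrow> a \<noteq> b \<Longrightarrow> {a,b} = {x,r}"
  unfolding merge_def by (auto split: if_splits)

lemma merge_image_doubleton:
  assumes "merge x r ` {a,b} = {u,w}"
  obtains "merge x r a = u" "merge x r b = w" | "merge x r a = w" "merge x r b = u"
  using assms by (auto simp: doubleton_eq_iff)

context
  fixes V :: "nat set" and x r :: nat and C :: "nat set"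
  assumes xV: "x \<in> V" and CV: "C \<subseteq> V - {x}" and rC: "r \<in> C"
begin

lemma root_child: "x \<noteq> r" "r \<in> V"
  using CV rC by auto

lemma merge_mem: "a \<in> V \<Longrightarrow> merge x r a \<in> V - {r}"
  unfolding merge_def using xV root_child by auto

context
  fixes E assumes E: "E \<in> rooted_trees V x C"
begin

lemma rooted_treeD: "is_graph V E" "connected_graph V E" "acyclic_graph E" "children E x = C"
  using E unfolding rooted_trees_def is_tree_def by auto

lemma adj_root_iff: "adj E x c \<longleftrightarrow> c \<in> C"
  using rooted_treeD(4) unfolding children_def by (metis mem_Collect_eq)

lemma root_edge: "{x,r} \<in> E"
  using adj_root_iff rC unfolding adj_def by blast

lemma grandchildren_subset: "children E r - {x} \<subseteq> V - {x} - C"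
proof
  fix d assume d: "d \<in> children E r - {x}"
  then have rd: "adj E r d" "d \<noteq> x" unfolding children_def by auto
  have "d \<notin> C"
  proof
    assume "d \<in> C"
    then have "adj E x d" "adj E x r" using rC adj_root_iff by auto
    moreover have "(adj (avoiding E x))\<^sup>*\<^sup>* r d"
      using rd root_child unfolding adj_def by auto
    ultimately have "d = r" using acyclic_children_eq[OF rooted_treeD(3)] by blast
    then show False using rd(1) unfolding adj_def by simp
  qed
  then show "d \<in> V - {x} - C" using is_graph_adjD[OF rooted_treeD(1) rd(1)] rd(2) by simp
qed

lemma contract_edge_graph: "is_graph (V - {r}) (contract_edge x r E)"
  unfolding is_graph_def contract_edge_def
proof
  fix e' assume "e' \<in> (\<lambda>e. merge x r ` e) ` (E - {{x,r}})"
  then obtain e where e: "e \<in> E" "e \<noteq> {x,r}" "e' = merge x r ` e" by blast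
  obtain a b where ab: "a \<noteq> b" "a \<in> V" "b \<in> V" "e = {a,b}" by (rule graph_edgeE[OF rooted_treeD(1) e(1)])
  have "merge x r a \<noteq> merge x r b" using merge_neq ab e(2) root_child by metis
  moreover have "merge x r a \<in> V - {r}" "merge x r b \<in> V - {r}" using merge_mem ab by auto
  ultimately show "\<exists>a b. a \<noteq> b \<and> a \<in> V - {r} \<and> b \<in> V - {r} \<and> e' = {a, b}"
    using e(3) ab(4) by auto
qed

lemma rtranclp_adj_contract_edge:
  assumes "adj E u w"
  shows "(adj (contract_edge x r E))\<^sup>*\<^sup>* (merge x r u) (merge x r w)"
proof (cases "{u,w} = {x,r}")
  case True
  then have "merge x r u = merge x r w" unfolding merge_def by (auto simp: doubleton_eq_iff)
  then show ?thesis by simp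
next
  case False
  have uw: "u \<noteq> w" "{u,w} \<in> E" using assms unfolding adj_def by auto
  have "merge x r ` {u,w} \<in> contract_edge x r E" unfolding contract_edge_def using uw False by blast
  then have "adj (contract_edge x r E) (merge x r u) (merge x r w)"
    using merge_neq[OF uw(1) False root_child(1)] unfolding adj_def by simp
  then show ?thesis by simp
qed

lemma contract_edge_connected: "connected_graph (V - {r}) (contract_edge x r E)"
  unfolding connected_graph_def
proof (intro ballI)
  fix u v assume uv: "u \<in> V - {r}" "v \<in> V - {r}"
  then have "(adj E)\<^sup>*\<^sup>* u v" using rooted_treeD(2) unfolding connected_graph_def by auto
  from rtranclp_map[of "adj E" _ "merge x r", OF rtranclp_adj_contract_edge this]
  show "(adj (contract_edge x r E))\<^sup>*\<^sup>* u v" using uv unfolding merge_def by simp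
qed

lemma merge_fibre_connected:
  assumes "e0 \<noteq> {x,r}" "merge x r u0 = merge x r u1"
  shows "(adj (E - {e0}))\<^sup>*\<^sup>* u0 u1"
proof (cases "u0 = u1")
  case False
  then have "{u0,u1} = {x,r}" using merge_eq assms(2) by blast
  then have "adj (E - {e0}) u0 u1" unfolding adj_def using root_edge assms(1) False by auto
  then show ?thesis by simp
qed simp

lemma lift_contract_edge_adj:
  assumes "adj (contract_edge x r E - {merge x r ` e0}) u w"
  obtains u0 w0 where "adj (E - {e0}) u0 w0" "merge x r u0 = u" "merge x r w0 = w"
proof -
  have uw: "{u,w} \<in> contract_edge x r E" "{u,w} \<noteq> merge x r ` e0"
    using assms unfolding adj_def by auto
  obtain f where f: "f \<in> E" "{u,w} = merge x r ` f"
    using uw(1) unfolding contract_edge_def by blast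
  obtain f1 f2 where ff: "f1 \<noteq> f2" "f = {f1,f2}"
    by (rule graph_edgeE[OF rooted_treeD(1) f(1)])
  have "f \<noteq> e0" using f(2) uw(2) by auto
  then have "adj (E - {e0}) f1 f2" "adj (E - {e0}) f2 f1"
    unfolding adj_def using ff f(1) by (auto simp: insert_commute)
  moreover have "merge x r ` {f1,f2} = {u,w}" using f(2) ff(2) by simp
  ultimately show ?thesis using that by (elim merge_image_doubleton) blast+
qed

lemma lift_contract_edge_path:
  assumes e0: "e0 \<noteq> {x,r}"
    and p: "(adj (contract_edge x r E - {merge x r ` e0}))\<^sup>*\<^sup>* a b"
    and a0: "merge x r a0 = a" and b0: "merge x r b0 = b"
  shows "(adj (E - {e0}))\<^sup>*\<^sup>* a0 b0"
proof (rule rtranclp_lift[OF p, where P = "\<lambda>u u0. merge x r u0 = u"])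
  show "merge x r a0 = a" "merge x r b0 = b" by (fact a0, fact b0)
  show "(adj (E - {e0}))\<^sup>*\<^sup>* u0 w0"
    if uw: "adj (contract_edge x r E - {merge x r ` e0}) u w" "merge x r u0 = u" "merge x r w0 = w"
    for u w u0 w0
  proof -
    obtain u1 w1 where e: "adj (E - {e0}) u1 w1" and m: "merge x r u1 = u" "merge x r w1 = w"
      using lift_contract_edge_adj[OF uw(1)] .
    have "(adj (E - {e0}))\<^sup>*\<^sup>* u0 u1" by (rule merge_fibre_connected[OF e0]) (simp add: uw(2) m(1))
    moreover have "(adj (E - {e0}))\<^sup>*\<^sup>* w1 w0" by (rule merge_fibre_connected[OF e0]) (simp add: uw(3) m(2))
    ultimately show ?thesis using e by (meson converse_rtranclp_into_rtranclp rtranclp_trans)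
  qed
  show "\<exists>u0. merge x r u0 = u" if "adj (contract_edge x r E - {merge x r ` e0}) u w" for u w
  proof -
    have "adj (contract_edge x r E) u w" using that unfolding adj_def by auto
    then have "u \<noteq> r" using is_graph_adjD[OF contract_edge_graph] by blast
    then show ?thesis unfolding merge_def by auto
  qed
  show "(adj (E - {e0}))\<^sup>*\<^sup>* u0 u1" if "merge x r u0 = u" "merge x r u1 = u" for u u0 u1
    using merge_fibre_connected[OF e0, of u0 u1] that by simp
qed

lemma contract_edge_acyclic: "acyclic_graph (contract_edge x r E)"
  unfolding acyclic_graph_def
proof (intro allI impI notI)
  fix a b assume ab: "a \<noteq> b \<and> {a, b} \<in> contract_edge x r E"
    and p: "(adj (contract_edge x r E - {{a, b}}))\<^sup>*\<^sup>* a b"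
  obtain e0 where e0: "e0 \<in> E" "e0 \<noteq> {x,r}" "{a,b} = merge x r ` e0"
    using ab unfolding contract_edge_def by blast
  obtain a0 b0 where ab0: "a0 \<noteq> b0" "e0 = {a0,b0}"
    by (rule graph_edgeE[OF rooted_treeD(1) e0(1)])
  have p': "(adj (contract_edge x r E - {merge x r ` e0}))\<^sup>*\<^sup>* a b"
    using p unfolding e0(3) .
  have "merge x r ` {a0,b0} = {a,b}" using e0(3) ab0(2) by simp
  then have "(adj (E - {e0}))\<^sup>*\<^sup>* a0 b0"
  proof (rule merge_image_doubleton)
    assume "merge x r a0 = a" "merge x r b0 = b"
    with p' show ?thesis by (rule lift_contract_edge_path[OF e0(2)])
  next
    assume h: "merge x r a0 = b" "merge x r b0 = a"
    have "(adj (E - {e0}))\<^sup>*\<^sup>* b0 a0" using lift_contract_edge_path[OF e0(2) p' h(2,1)] .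
    then show ?thesis by (rule rtranclp_adj_sym)
  qed
  then have "(adj (E - {{a0,b0}}))\<^sup>*\<^sup>* a0 b0" using ab0(2) by simp
  moreover have "a0 \<noteq> b0 \<and> {a0,b0} \<in> E" using ab0 e0(1) by simp
  ultimately show False using rooted_treeD(3) unfolding acyclic_graph_def by blast
qed

lemma mem_contract_edge:
  "e \<in> contract_edge x r E \<longleftrightarrow>
     (e \<in> E \<and> r \<notin> e) \<or> (\<exists>d. {r,d} \<in> E \<and> d \<noteq> x \<and> d \<noteq> r \<and> e = {x,d})"
proof
  assume "e \<in> contract_edge x r E"
  then obtain f where f: "f \<in> E" "f \<noteq> {x,r}" "e = merge x r ` f"
    unfolding contract_edge_def by blast
  obtain p q where pq: "p \<noteq> q" "f = {p,q}" by (rule graph_edgeE[OF rooted_treeD(1) f(1)])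
  show "(e \<in> E \<and> r \<notin> e) \<or> (\<exists>d. {r,d} \<in> E \<and> d \<noteq> x \<and> d \<noteq> r \<and> e = {x,d})"
  proof (cases "r \<in> f")
    case False
    then have "merge x r ` f = f" unfolding merge_def by auto
    then show ?thesis using f False by auto
  next
    case True
    then obtain d where d: "f = {r,d}" "d \<noteq> r" using pq by auto
    then have "d \<noteq> x" using f(2) by auto
    moreover have "e = {x,d}" using f(3) d unfolding merge_def by auto
    ultimately show ?thesis using f(1) d by blast
  qed
next
  assume "(e \<in> E \<and> r \<notin> e) \<or> (\<exists>d. {r,d} \<in> E \<and> d \<noteq> x \<and> d \<noteq> r \<and> e = {x,d})"
  then show "e \<in> contract_edge x r E"
  proof
    assume e: "e \<in> E \<and> r \<notin> e"
    then have "merge x r ` e = e" "e \<noteq> {x,r}" unfolding merge_def by auto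
    then show ?thesis unfolding contract_edge_def using e by (metis DiffI image_eqI singletonD)
  next
    assume "\<exists>d. {r,d} \<in> E \<and> d \<noteq> x \<and> d \<noteq> r \<and> e = {x,d}"
    then obtain d where d: "{r,d} \<in> E" "d \<noteq> x" "d \<noteq> r" "e = {x,d}" by blast
    then have "merge x r ` {r,d} = e" "{r,d} \<noteq> {x,r}"
      unfolding merge_def by (auto simp: doubleton_eq_iff)
    then show ?thesis unfolding contract_edge_def using d(1) by blast
  qed
qed

lemma children_contract_edge: "children (contract_edge x r E) x = (C - {r}) \<union> (children E r - {x})"
proof (rule set_eqI)
  fix c
  have "c \<in> children (contract_edge x r E) x \<longleftrightarrow>
      c \<noteq> x \<and> c \<noteq> r \<and> ({x,c} \<in> E \<or> {r,c} \<in> E)"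
    unfolding children_def adj_def mem_contract_edge using root_child(1)
    by (auto simp: doubleton_eq_iff)
  also have "\<dots> \<longleftrightarrow> c \<in> (C - {r}) \<union> (children E r - {x})"
    using adj_root_iff[of c] root_child(1) unfolding children_def adj_def by auto
  finally show "c \<in> children (contract_edge x r E) x \<longleftrightarrow> c \<in> (C - {r}) \<union> (children E r - {x})" .
qed

lemma contract_edge_in_rooted_trees:
  "contract_edge x r E \<in> rooted_trees (V - {r}) x ((C - {r}) \<union> (children E r - {x}))"
  unfolding rooted_trees_def is_tree_def
  using contract_edge_graph contract_edge_connected contract_edge_acyclic children_contract_edge
  by simp

lemma expand_contract_edge: "expand_edge x r (children E r - {x}) (contract_edge x r E) = E"
proof (rule set_eqI)
  fix e
  let ?D = "children E r - {x}"
  have xd: "{x,d} \<notin> E" if "d \<in> ?D" for d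
    using that grandchildren_subset adj_root_iff[of d] unfolding adj_def by auto
  show "e \<in> expand_edge x r ?D (contract_edge x r E) \<longleftrightarrow> e \<in> E"
  proof
    assume "e \<in> expand_edge x r ?D (contract_edge x r E)"
    then consider "e \<in> contract_edge x r E" "e \<notin> (\<lambda>d. {x,d}) ` ?D" | "e \<in> (\<lambda>d. {r,d}) ` ?D"
      | "e = {x,r}"
      unfolding expand_edge_def by blast
    then show "e \<in> E"
    proof cases
      case 1
      then show ?thesis unfolding mem_contract_edge children_def adj_def by auto
    next
      case 2
      then show ?thesis unfolding children_def adj_def by auto
    qed (use root_edge in simp)
  next
    assume e: "e \<in> E"
    obtain p q where pq: "p \<noteq> q" "e = {p,q}" by (rule graph_edgeE[OF rooted_treeD(1) e])
    consider "e = {x,r}" | "r \<in> e" "e \<noteq> {x,r}" | "r \<notin> e" by blast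
    then show "e \<in> expand_edge x r ?D (contract_edge x r E)"
    proof cases
      case 2
      then obtain d where d: "e = {r,d}" "d \<noteq> r" using pq by auto
      then have "d \<in> ?D" using e 2(2) unfolding children_def adj_def by auto
      then show ?thesis unfolding expand_edge_def using d(1) by blast
    next
      case 3
      then have "e \<in> contract_edge x r E" unfolding mem_contract_edge using e by blast
      moreover have "e \<notin> (\<lambda>d. {x,d}) ` ?D" using xd e by auto
      ultimately show ?thesis unfolding expand_edge_def by blast
    qed (simp add: expand_edge_def)
  qed
qed

end

context
  fixes D E' assumes DV: "D \<subseteq> V - {x} - C" and E': "E' \<in> rooted_trees (V - {r}) x ((C - {r}) \<union> D)"
begin

lemma contracted_treeD: "is_graph (V - {r}) E'" "connected_graph (V - {r}) E'" "acyclic_graph E'"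
  "children E' x = (C - {r}) \<union> D"
  using E' unfolding rooted_trees_def is_tree_def by auto

lemma new_child: "d \<in> D \<Longrightarrow> d \<noteq> x \<and> d \<noteq> r \<and> d \<in> V \<and> d \<notin> C \<and> adj E' x d"
  using DV rC contracted_treeD(4) unfolding children_def by auto

lemma r_notin_contracted_edge: "f \<in> E' \<Longrightarrow> r \<notin> f"
  using is_graph_Pow[OF contracted_treeD(1)] by blast

lemma expand_edge_cases:
  assumes f: "f \<in> expand_edge x r D E'" "f \<noteq> {x,r}"
  obtains "f \<in> E'" "f \<notin> (\<lambda>d. {x,d}) ` D" "merge x r ` f = f"
    | d where "d \<in> D" "f = {r,d}" "merge x r ` f = {x,d}"
proof -
  consider "f \<in> E'" "f \<notin> (\<lambda>d. {x,d}) ` D" | d where "d \<in> D" "f = {r,d}"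
    using f unfolding expand_edge_def by blast
  then show ?thesis
  proof cases
    case 1
    moreover have "merge x r ` f = f"
      using r_notin_contracted_edge[OF 1(1)] unfolding merge_def by auto
    ultimately show ?thesis by (rule that(1))
  next
    case 2
    moreover have "merge x r ` f = {x,d}"
      using 2(2) new_child[OF 2(1)] unfolding merge_def by auto
    ultimately show ?thesis by (rule that(2))
  qed
qed

lemma merge_expand_edge_mem: "f \<in> expand_edge x r D E' \<Longrightarrow> f \<noteq> {x,r} \<Longrightarrow> merge x r ` f \<in> E'"
proof (elim expand_edge_cases)
  assume "f \<in> E'" "merge x r ` f = f"
  then show "merge x r ` f \<in> E'" by simp
next
  fix d assume "d \<in> D" "merge x r ` f = {x,d}"
  then show "merge x r ` f \<in> E'" using new_child unfolding adj_def by auto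
qed

lemma merge_expand_edge_inj: "inj_on (image (merge x r)) (expand_edge x r D E' - {{x,r}})"
proof -
  define unmerge where
    "unmerge e = (if e \<in> (\<lambda>d. {x,d}) ` D then (\<lambda>v. if v = x then r else v) ` e else e)" for e
  have "unmerge (merge x r ` f) = f" if "f \<in> expand_edge x r D E' - {{x,r}}" for f
  proof -
    from that have "f \<in> expand_edge x r D E'" "f \<noteq> {x,r}" by auto
    then show ?thesis
    proof (elim expand_edge_cases)
      assume "f \<notin> (\<lambda>d. {x,d}) ` D" "merge x r ` f = f"
      then show ?thesis unfolding unmerge_def by simp
    next
      fix d assume "d \<in> D" "f = {r,d}" "merge x r ` f = {x,d}"
      then show ?thesis unfolding unmerge_def using new_child[of d] by auto
    qed
  qed
  then show ?thesis by (rule inj_on_inverseI)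
qed

lemma expand_edge_graph: "is_graph V (expand_edge x r D E')"
  unfolding is_graph_def
proof
  fix f assume f: "f \<in> expand_edge x r D E'"
  show "\<exists>a b. a \<noteq> b \<and> a \<in> V \<and> b \<in> V \<and> f = {a, b}"
  proof (cases "f = {x,r}")
    case True then show ?thesis using xV root_child by metis
  next
    case False
    from f False show ?thesis
    proof (elim expand_edge_cases)
      assume "f \<in> E'"
      then show ?thesis using graph_edgeE[OF contracted_treeD(1)] by (metis Diff_iff)
    next
      fix d assume "d \<in> D" "f = {r,d}"
      then show ?thesis using new_child root_child by metis
    qed
  qed
qed

lemma adj_expand_edge_root: "adj (expand_edge x r D E') x r"
  using root_child unfolding expand_edge_def adj_def by simp

lemma adj_expand_edge_new_child: "d \<in> D \<Longrightarrow> adj (expand_edge x r D E') r d"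
  using new_child unfolding expand_edge_def adj_def by blast

lemma expand_edge_connected: "connected_graph V (expand_edge x r D E')"
proof (rule connected_graphI[OF xV])
  let ?X = "expand_edge x r D E'"
  have step: "(adj ?X)\<^sup>*\<^sup>* u w" if uw: "adj E' u w" for u w
  proof (cases "{u,w} \<in> (\<lambda>d. {x,d}) ` D")
    case True
    then obtain d where d: "d \<in> D" "{u,w} = {x,d}" by blast
    have "(adj ?X)\<^sup>*\<^sup>* x d"
      using adj_expand_edge_root adj_expand_edge_new_child[OF d(1)]
      by (meson converse_rtranclp_into_rtranclp r_into_rtranclp)
    then show ?thesis using d(2) rtranclp_adj_sym by (metis doubleton_eq_iff)
  next
    case False
    then have "adj ?X u w" using uw unfolding adj_def expand_edge_def by auto
    then show ?thesis by simp
  qed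
  fix v assume v: "v \<in> V"
  show "(adj ?X)\<^sup>*\<^sup>* v x"
  proof (cases "v = r")
    case True
    then show ?thesis using adj_expand_edge_root adj_sym by blast
  next
    case False
    then have "(adj E')\<^sup>*\<^sup>* v x"
      using contracted_treeD(2) v xV root_child unfolding connected_graph_def by auto
    from rtranclp_map[of "adj E'" "adj ?X" "\<lambda>v. v", OF step this] show ?thesis .
  qed
qed

text \<open>Without the edge \<open>{x, r}\<close>, the vertices reachable from \<open>r\<close> stay inside \<open>r\<close> and
  the subtrees hanging from the new children \<open>D\<close>, which do not contain \<open>x\<close>.\<close>
lemma expand_edge_root_edge_bridge: "\<not> (adj (expand_edge x r D E' - {{x,r}}))\<^sup>*\<^sup>* r x"
proof
  assume p: "(adj (expand_edge x r D E' - {{x,r}}))\<^sup>*\<^sup>* r x"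
  define Z where "Z = insert r (hanging_vertices E' x D)"
  have xD: "x \<notin> D" using DV by auto
  have step: "w \<in> Z" if s: "adj (expand_edge x r D E' - {{x,r}}) u w" and uZ: "u \<in> Z" for u w
  proof -
    have uw: "u \<noteq> w" "{u,w} \<in> expand_edge x r D E'" "{u,w} \<noteq> {x,r}"
      using s unfolding adj_def by auto
    from uw(2,3) show ?thesis
    proof (elim expand_edge_cases)
      assume A: "{u,w} \<in> E'" "{u,w} \<notin> (\<lambda>d. {x,d}) ` D"
      then have "r \<notin> {u,w}" using r_notin_contracted_edge by blast
      then have uh: "u \<in> hanging_vertices E' x D" using uZ unfolding Z_def by auto
      then obtain c where c: "c \<in> D" "(adj (avoiding E' x))\<^sup>*\<^sup>* c u"
        unfolding hanging_vertices_def by blast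
      show ?thesis
      proof (cases "w = x")
        case True
        then have "adj E' x u" using A uw(1) unfolding adj_def by (auto simp: insert_commute)
        then have "u = c" using acyclic_children_eq[OF contracted_treeD(3) _ _ c(2)] new_child[OF c(1)]
          by blast
        then show ?thesis using A True c(1) by (auto simp: insert_commute)
      next
        case False
        have "u \<noteq> x" using uh root_notin_hanging_vertices[OF xD] by auto
        then have "adj (avoiding E' x) u w" using A uw(1) False unfolding adj_def by auto
        then show ?thesis using c unfolding Z_def hanging_vertices_def
          by (auto intro: rtranclp.rtrancl_into_rtrancl)
      qed
    next
      fix d assume "d \<in> D" "{u,w} = {r,d}"
      then show ?thesis unfolding Z_def hanging_vertices_def by (auto simp: doubleton_eq_iff)
    qed
  qed
  have "x \<in> Z" by (rule rtranclp_closed[OF p _ step]) (simp add: Z_def)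
  then show False
    unfolding Z_def using root_notin_hanging_vertices[OF xD] root_child by auto
qed

lemma expand_edge_acyclic: "acyclic_graph (expand_edge x r D E')"
  unfolding acyclic_graph_def
proof (intro allI impI notI)
  let ?X = "expand_edge x r D E'" and ?m = "merge x r"
  fix a b assume ab: "a \<noteq> b \<and> {a, b} \<in> ?X" and p: "(adj (?X - {{a, b}}))\<^sup>*\<^sup>* a b"
  show False
  proof (cases "{a,b} = {x,r}")
    case True
    then have p': "(adj (?X - {{x,r}}))\<^sup>*\<^sup>* a b" using p by simp
    have "a = x \<and> b = r \<or> a = r \<and> b = x" using True by (auto simp: doubleton_eq_iff)
    then have "(adj (?X - {{x,r}}))\<^sup>*\<^sup>* r x"
      by (elim disjE) (use p' in \<open>auto intro: rtranclp_adj_sym\<close>)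
    then show False using expand_edge_root_edge_bridge by blast
  next
    case False
    have step: "(adj (E' - {?m ` {a,b}}))\<^sup>*\<^sup>* (?m u) (?m w)" if s: "adj (?X - {{a,b}}) u w" for u w
    proof (cases "{u,w} = {x,r}")
      case True
      then have "?m u = ?m w" unfolding merge_def by (auto simp: doubleton_eq_iff)
      then show ?thesis by simp
    next
      case uw_xr: False
      have uw: "u \<noteq> w" "{u,w} \<in> ?X" "{u,w} \<noteq> {a,b}" using s unfolding adj_def by auto
      have "?m ` {u,w} \<noteq> ?m ` {a,b}"
        using inj_onD[OF merge_expand_edge_inj, of "{u,w}" "{a,b}"] uw uw_xr ab False by blast
      then have "adj (E' - {?m ` {a,b}}) (?m u) (?m w)"
        using merge_expand_edge_mem[OF uw(2) uw_xr] merge_neq[OF uw(1) uw_xr root_child(1)]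
        unfolding adj_def by simp
      then show ?thesis by simp
    qed
    have "(adj (E' - {?m ` {a,b}}))\<^sup>*\<^sup>* (?m a) (?m b)"
      using rtranclp_map[of "adj (?X - {{a,b}})" "adj (E' - {?m ` {a,b}})" ?m, OF step p] .
    moreover have "?m ` {a,b} \<in> E'" using merge_expand_edge_mem ab False by blast
    moreover have "?m a \<noteq> ?m b" using merge_neq ab False root_child by metis
    ultimately show False using contracted_treeD(3) unfolding acyclic_graph_def by simp
  qed
qed

lemma children_expand_edge: "children (expand_edge x r D E') x = C"
proof -
  have "{x,c} \<in> (\<lambda>d. {x,d}) ` D \<longleftrightarrow> c \<in> D" for c
    using new_child by (auto simp: doubleton_eq_iff)
  moreover have "{x,c} \<notin> (\<lambda>d. {r,d}) ` D" for c
    using new_child root_child by (auto simp: doubleton_eq_iff)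
  ultimately have "adj (expand_edge x r D E') x c \<longleftrightarrow> (adj E' x c \<and> c \<notin> D) \<or> c = r" for c
    using root_child unfolding adj_def expand_edge_def by (auto simp: doubleton_eq_iff)
  moreover have "adj E' x c \<longleftrightarrow> c \<in> (C - {r}) \<union> D" for c
    using contracted_treeD(4) unfolding children_def by (metis mem_Collect_eq)
  ultimately show ?thesis using new_child rC unfolding children_def by auto
qed

lemma children_expand_edge_child: "children (expand_edge x r D E') r - {x} = D"
proof -
  have "{r,c} \<notin> E'" for c using r_notin_contracted_edge by blast
  moreover have "{r,c} \<in> (\<lambda>d. {r,d}) ` D \<longleftrightarrow> c \<in> D" for c
    using new_child by (auto simp: doubleton_eq_iff)
  ultimately have "adj (expand_edge x r D E') r c \<and> c \<noteq> x \<longleftrightarrow> c \<in> D" for c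
    using new_child root_child unfolding adj_def expand_edge_def
    by (auto simp: doubleton_eq_iff)
  then show ?thesis unfolding children_def by blast
qed

lemma contract_expand_edge: "contract_edge x r (expand_edge x r D E') = E'"
proof (rule set_eqI)
  fix e
  show "e \<in> contract_edge x r (expand_edge x r D E') \<longleftrightarrow> e \<in> E'"
  proof
    assume "e \<in> contract_edge x r (expand_edge x r D E')"
    then show "e \<in> E'" unfolding contract_edge_def using merge_expand_edge_mem by blast
  next
    assume e: "e \<in> E'"
    show "e \<in> contract_edge x r (expand_edge x r D E')"
    proof (cases "e \<in> (\<lambda>d. {x,d}) ` D")
      case True
      then obtain d where d: "d \<in> D" "e = {x,d}" by blast
      have "{r,d} \<in> expand_edge x r D E'" "{r,d} \<noteq> {x,r}" "merge x r ` {r,d} = e"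
        using d new_child[OF d(1)] unfolding expand_edge_def merge_def
        by (auto simp: doubleton_eq_iff)
      then show ?thesis unfolding contract_edge_def by blast
    next
      case False
      moreover have "r \<notin> e" using r_notin_contracted_edge[OF e] .
      ultimately have "e \<in> expand_edge x r D E' - {{x,r}}" "merge x r ` e = e"
        using e unfolding expand_edge_def merge_def by auto
      then show ?thesis unfolding contract_edge_def by (metis image_eqI)
    qed
  qed
qed

lemma expand_edge_in_rooted_trees: "expand_edge x r D E' \<in> rooted_trees V x C"
  unfolding rooted_trees_def is_tree_def
  using expand_edge_graph expand_edge_connected expand_edge_acyclic children_expand_edge by simp

end

lemma contract_edge_bij:
  "bij_betw (\<lambda>E. (children E r - {x}, contract_edge x r E)) (rooted_trees V x C)
     (SIGMA D:Pow (V - {x} - C). rooted_trees (V - {r}) x ((C - {r}) \<union> D))"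
proof (rule bij_betw_byWitness[where f' = "\<lambda>(D, E'). expand_edge x r D E'"])
  show "\<forall>E\<in>rooted_trees V x C.
          (\<lambda>(D, E'). expand_edge x r D E') (children E r - {x}, contract_edge x r E) = E"
    using expand_contract_edge by simp
  show "\<forall>P\<in>SIGMA D:Pow (V - {x} - C). rooted_trees (V - {r}) x (C - {r} \<union> D).
          (\<lambda>E. (children E r - {x}, contract_edge x r E)) ((\<lambda>(D, E'). expand_edge x r D E') P) = P"
    using children_expand_edge_child contract_expand_edge by auto
  show "(\<lambda>E. (children E r - {x}, contract_edge x r E)) ` rooted_trees V x C
          \<subseteq> (SIGMA D:Pow (V - {x} - C). rooted_trees (V - {r}) x ((C - {r}) \<union> D))"
    using contract_edge_in_rooted_trees grandchildren_subset by blast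
  show "(\<lambda>(D, E'). expand_edge x r D E') ` (SIGMA D:Pow (V - {x} - C). rooted_trees (V - {r}) x ((C - {r}) \<union> D))
          \<subseteq> rooted_trees V x C"
    using expand_edge_in_rooted_trees by auto
qed

end

lemma card_rooted_trees_contract:
  assumes "finite V" "x \<in> V" "C \<subseteq> V - {x}" "r \<in> C"
  shows "card (rooted_trees V x C)
           = (\<Sum>D\<in>Pow (V - {x} - C). card (rooted_trees (V - {r}) x ((C - {r}) \<union> D)))"
  using bij_betw_same_card[OF contract_edge_bij[OF assms(2-4)]] assms(1)
  by (simp add: card_SigmaI finite_rooted_trees)

section \<open>Counting rooted trees by the children of the root\<close>

lemma real_mult_phi:
  assumes "1 \<le> M" "i \<le> M"
  shows "real M * phi M i = real i * real M ^ (M - i)"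
proof -
  have "real M * real M powi (int M - int i - 1) = real M powi (int M - int i - 1 + 1)"
    using assms by (subst power_int_add_1') auto
  also have "int M - int i - 1 + 1 = int (M - i)" using assms by simp
  finally have "real M * real M powi (int M - int i - 1) = real M ^ (M - i)" by simp
  then show ?thesis using assms by (simp add: phi_def algebra_simps)
qed

lemma binomial_sum_pow: "(\<Sum>d\<le>a. real (a choose d) * X ^ (a - d)) = (X + 1) ^ a"
  using binomial_ring[of "1::real" X a] by (simp add: add.commute)

lemma binomial_sum_mult_pow:
  "(X + 1) * (\<Sum>d\<le>a. real (a choose d) * real d * X ^ (a - d)) = real a * (X + 1) ^ a"
proof (cases a)
  case (Suc b)
  have "(\<Sum>d\<le>Suc b. real (Suc b choose d) * real d * X ^ (Suc b - d))
      = (\<Sum>d\<le>b. real (Suc b choose Suc d) * real (Suc d) * X ^ (b - d))"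
    by (subst sum.atMost_Suc_shift) simp
  also have "\<dots> = (\<Sum>d\<le>b. real (Suc b) * (real (b choose d) * X ^ (b - d)))"
  proof (rule sum.cong)
    fix d
    have "Suc d * (Suc b choose Suc d) = Suc b * (b choose d)"
      using binomial_absorption[of d "Suc b"] by simp
    then have "real (Suc b choose Suc d) * real (Suc d) = real (Suc b) * real (b choose d)"
      by (metis of_nat_mult mult.commute)
    then show "real (Suc b choose Suc d) * real (Suc d) * X ^ (b - d)
        = real (Suc b) * (real (b choose d) * X ^ (b - d))"
      by simp
  qed simp
  also have "\<dots> = real (Suc b) * (X + 1) ^ b"
    using binomial_sum_pow[of b X] by (simp add: sum_distrib_left[symmetric])
  finally show ?thesis using Suc by simp
qed simp

lemma phi_recurrence:
  assumes N: "1 \<le> N" and j: "1 \<le> j" "j \<le> N"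
  shows "(\<Sum>d\<le>N-j. real (N-j choose d) * phi (N-1) (j-1+d)) = phi N j"
proof (cases "N = 1")
  case True
  then show ?thesis using j by (simp add: phi_def)
next
  case False
  define a where "a = N - j"
  define X where "X = real (N-1)"
  have XN: "real N = X + 1" using N by (simp add: X_def of_nat_diff)
  have X1: "X \<ge> 1" using N False by (simp add: X_def)
  \<comment> \<open>Both sides are multiplied by \<open>X (X + 1)\<close>, which avoids the exponent \<open>a - 1\<close>
    (truncated when \<open>j = N\<close>) in \<open>phi N j = j (X + 1)^(a - 1)\<close>.\<close>
  have summand: "X * phi (N-1) (j-1+d) = (real (j-1) + real d) * X^(a-d)" if "d \<le> a" for d
  proof -
    have "N - 1 - (j-1+d) = a - d" using j that a_def by auto
    then show ?thesis
      using real_mult_phi[of "N-1" "j-1+d"] N False j that a_def unfolding X_def by simp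
  qed
  have "X * (\<Sum>d\<le>a. real (a choose d) * phi (N-1) (j-1+d))
      = (\<Sum>d\<le>a. real (a choose d) * (X * phi (N-1) (j-1+d)))"
    by (simp add: sum_distrib_left algebra_simps)
  also have "\<dots> = (\<Sum>d\<le>a. real (j-1) * (real (a choose d) * X^(a-d))
                       + real (a choose d) * real d * X^(a-d))"
  proof (rule sum.cong[OF refl])
    fix d assume "d \<in> {..a}"
    then show "real (a choose d) * (X * phi (N-1) (j-1+d))
        = real (j-1) * (real (a choose d) * X^(a-d)) + real (a choose d) * real d * X^(a-d)"
      using summand[of d] by (simp add: algebra_simps)
  qed
  also have "\<dots> = real (j-1) * (X+1)^a + (\<Sum>d\<le>a. real (a choose d) * real d * X^(a-d))"
    by (simp add: sum.distrib sum_distrib_left[symmetric] binomial_sum_pow)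
  finally have "(X+1) * (X * (\<Sum>d\<le>a. real (a choose d) * phi (N-1) (j-1+d)))
      = (X+1)^a * (real (j-1) * (X+1) + real a)"
    using binomial_sum_mult_pow[of X a] by (simp add: algebra_simps)
  also have "real (j-1) * (X+1) + real a = real j * X"
    using XN j a_def by (simp add: of_nat_diff algebra_simps)
  also have "(X+1)^a * (real j * X) = (X+1) * (X * phi N j)"
    using real_mult_phi[of N j] N j XN a_def by (simp add: algebra_simps)
  finally show ?thesis using X1 unfolding a_def by simp
qed

lemma sum_Pow_card:
  assumes "finite A"
  shows "(\<Sum>D\<in>Pow A. g (card D)) = (\<Sum>d\<le>card A. real (card A choose d) * (g d :: real))"
proof -
  have "(\<Sum>D\<in>Pow A. g (card D)) = (\<Sum>d\<le>card A. \<Sum>D\<in>{D\<in>Pow A. card D = d}. g (card D))"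
    by (rule sum.group[symmetric]) (use assms card_mono in auto)
  also have "\<dots> = (\<Sum>d\<le>card A. real (card A choose d) * g d)"
  proof (rule sum.cong)
    fix d
    have "{D\<in>Pow A. card D = d} = {B. B \<subseteq> A \<and> card B = d}" by auto
    then show "(\<Sum>D\<in>{D\<in>Pow A. card D = d}. g (card D)) = real (card A choose d) * g d"
      using n_subsets[OF assms, of d] by simp
  qed simp
  finally show ?thesis .
qed

lemma rooted_trees_singleton: "rooted_trees {x} x {} = {{}}"
proof -
  have "is_graph {x} E \<longleftrightarrow> E = {}" for E
    unfolding is_graph_def by auto
  moreover have "children {} x = {}"
    unfolding children_def adj_def by simp
  ultimately show ?thesis
    unfolding rooted_trees_def is_tree_def connected_graph_def acyclic_graph_def by auto
qed

lemma rooted_trees_no_children: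
  assumes "x \<in> V" "v \<in> V" "v \<noteq> x"
  shows "rooted_trees V x {} = {}"
  using hanging_vertices_children[of V _ x v] assms
  unfolding rooted_trees_def is_tree_def hanging_vertices_def by auto

lemma card_rooted_trees_no_children:
  assumes "finite V" "x \<in> V"
  shows "real (card (rooted_trees V x {})) = phi (card V - 1) 0"
proof (cases "V = {x}")
  case True
  then show ?thesis using rooted_trees_singleton by (simp add: phi_def)
next
  case False
  then obtain v where v: "v \<in> V" "v \<noteq> x" using assms(2) by blast
  then have "card {x, v} \<le> card V" using assms by (intro card_mono) auto
  then show ?thesis using v rooted_trees_no_children[OF assms(2) v] by (simp add: phi_def)
qed

lemma sum_Pow_phi:
  assumes "finite A" "card A = N - j" "1 \<le> j" "j \<le> N"
  shows "(\<Sum>D\<in>Pow A. phi (N - 1) (j - 1 + card D)) = phi N j"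
proof -
  have "(\<Sum>D\<in>Pow A. phi (N - 1) (j - 1 + card D))
      = (\<Sum>d\<le>N - j. real (N - j choose d) * phi (N - 1) (j - 1 + d))"
    using sum_Pow_card[OF assms(1)] unfolding assms(2) .
  also have "\<dots> = phi N j" by (rule phi_recurrence) (use assms in auto)
  finally show ?thesis .
qed

theorem card_rooted_trees:
  assumes "finite V" "x \<in> V" "C \<subseteq> V - {x}"
  shows "real (card (rooted_trees V x C)) = phi (card V - 1) (card C)"
  using assms
proof (induction "card V" arbitrary: V C rule: less_induct)
  case less
  note fin = less.prems(1) and xV = less.prems(2) and CV = less.prems(3)
  show ?case
  proof (cases "C = {}")
    case True
    then show ?thesis using card_rooted_trees_no_children[OF fin xV] by simp
  next
    case False
    then obtain r where rC: "r \<in> C" by blast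
    define A where "A = V - {x} - C"
    have finC: "finite C" and finA: "finite A"
      using CV fin finite_subset unfolding A_def by auto
    have rV: "r \<in> V" "r \<noteq> x" using rC CV by auto
    have IH: "real (card (rooted_trees (V - {r}) x ((C - {r}) \<union> D)))
        = phi (card V - 1 - 1) (card C - 1 + card D)" if D: "D \<in> Pow A" for D
    proof -
      have "finite D" "(C - {r}) \<inter> D = {}" using D finA finite_subset unfolding A_def by auto
      then have "card ((C - {r}) \<union> D) = card C - 1 + card D"
        using rC finC by (simp add: card_Un_disjoint)
      moreover have "(C - {r}) \<union> D \<subseteq> V - {r} - {x}" using D CV rV rC unfolding A_def by auto
      moreover have "card (V - {r}) < card V" using fin rV(1) by (rule card_Diff1_less)
      ultimately show ?thesis
        using less.hyps[of "V - {r}" "(C - {r}) \<union> D"] fin xV rV by simp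
    qed
    have "real (card (rooted_trees V x C))
        = (\<Sum>D\<in>Pow A. real (card (rooted_trees (V - {r}) x ((C - {r}) \<union> D))))"
      using card_rooted_trees_contract[OF fin xV CV rC] unfolding A_def by simp
    also have "\<dots> = (\<Sum>D\<in>Pow A. phi (card V - 1 - 1) (card C - 1 + card D))"
      using IH by (rule sum.cong[OF refl])
    also have "\<dots> = phi (card V - 1) (card C)"
    proof (rule sum_Pow_phi[OF finA])
      show "card A = card V - 1 - card C"
        unfolding A_def using CV fin xV by (simp add: card_Diff_subset finite_subset)
      show "1 \<le> card C" using rC finC by (auto simp: Suc_le_eq card_gt_0_iff)
      show "card C \<le> card V - 1" using card_mono[OF _ CV] fin xV by simp
    qed
    finally show ?thesis .
  qed
qed

section \<open>Counting by the split of the root's children\<close>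

definition lower_children :: "nat set set \<Rightarrow> nat \<Rightarrow> nat set" where
  "lower_children E x = {c\<in>children E x. c < x}"

definition upper_children :: "nat set set \<Rightarrow> nat \<Rightarrow> nat set" where
  "upper_children E x = {c\<in>children E x. x < c}"

definition root_split :: "nat set set \<Rightarrow> nat \<Rightarrow> nat set \<times> nat set \<times> nat set" where
  "root_split E x =
     (lower_children E x, upper_children E x, hanging_vertices E x (lower_children E x))"

definition root_splits :: "nat set \<Rightarrow> nat \<Rightarrow> nat \<Rightarrow> nat \<Rightarrow> nat \<Rightarrow> (nat set \<times> nat set \<times> nat set) set" where
  "root_splits V x k l m = {(Cs, Cl, S). Cs \<subseteq> {v\<in>V. v < x} \<and> card Cs = k
     \<and> Cl \<subseteq> {v\<in>V. x < v} \<and> card Cl = l \<and> Cs \<subseteq> S \<and> S \<subseteq> V - {x} - Cl \<and> card S = m}"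

lemma hanging_vertices_subset:
  assumes tree: "is_tree V E" and C: "C \<subseteq> children E x"
  shows "hanging_vertices E x C \<subseteq> V - {x} - (children E x - C)"
proof
  fix v assume "v \<in> hanging_vertices E x C"
  then obtain c where c: "c \<in> C" "(adj (avoiding E x))\<^sup>*\<^sup>* c v"
    unfolding hanging_vertices_def by blast
  have g: "is_graph V E" and ac: "acyclic_graph E" using tree unfolding is_tree_def by auto
  have xc: "adj E x c" using c(1) C unfolding children_def by auto
  have "v \<in> V"
  proof (rule rtranclp_closed[OF c(2)])
    show "c \<in> V" using is_graph_adjD[OF g xc] by simp
    show "w \<in> V" if "adj (avoiding E x) u w" for u w
      using is_graph_adjD[OF g adj_mono[OF _ that]] by blast
  qed
  moreover have "v \<noteq> x" using rtranclp_avoiding_neq[OF c(2)] xc unfolding adj_def by auto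
  moreover have "v \<notin> children E x - C"
  proof
    assume "v \<in> children E x - C"
    then have "v = c" using acyclic_children_eq[OF ac _ xc c(2)] unfolding children_def by auto
    then show False using c(1) \<open>v \<in> children E x - C\<close> by simp
  qed
  ultimately show "v \<in> V - {x} - (children E x - C)" by simp
qed

lemma root_split_in_root_splits:
  assumes "is_tree V E"
  shows "root_split E x \<in> root_splits V x (card (lower_children E x)) (card (upper_children E x))
           (card (hanging_vertices E x (lower_children E x)))"
proof -
  have ch: "children E x \<subseteq> V - {x}" using assms children_subset unfolding is_tree_def by blast
  have "children E x - lower_children E x = upper_children E x"
    using ch unfolding lower_children_def upper_children_def by auto
  then have "hanging_vertices E x (lower_children E x) \<subseteq> V - {x} - upper_children E x"
    using hanging_vertices_subset[OF assms, of "lower_children E x" x]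
    unfolding lower_children_def by auto
  then show ?thesis
    using ch subset_hanging_vertices
    unfolding root_split_def root_splits_def lower_children_def upper_children_def by auto
qed

lemma root_split_fibre:
  assumes "(Cs, Cl, S) \<in> root_splits V x k l m"
  shows "{E. is_tree V E \<and> root_split E x = (Cs, Cl, S)} = split_trees V x Cs Cl S"
proof -
  have "lower_children E x = Cs \<and> upper_children E x = Cl \<longleftrightarrow> children E x = Cs \<union> Cl"
    if "is_tree V E" for E
    using assms children_subset[of V E x] that
    unfolding root_splits_def lower_children_def upper_children_def is_tree_def
    by auto
  then show ?thesis unfolding root_split_def split_trees_def by auto
qed

lemma card_supersets:
  assumes fin: "finite W" and AW: "A \<subseteq> W" and m: "card A \<le> m"
  shows "card {S. A \<subseteq> S \<and> S \<subseteq> W \<and> card S = m} = (card W - card A) choose (m - card A)"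
proof -
  have finA: "finite A" using fin AW finite_subset by blast
  have "bij_betw (\<lambda>S. S - A) {S. A \<subseteq> S \<and> S \<subseteq> W \<and> card S = m} {S'. S' \<subseteq> W - A \<and> card S' = m - card A}"
  proof (rule bij_betw_byWitness[where f' = "\<lambda>S'. S' \<union> A"])
    show "(\<lambda>S. S - A) ` {S. A \<subseteq> S \<and> S \<subseteq> W \<and> card S = m} \<subseteq> {S'. S' \<subseteq> W - A \<and> card S' = m - card A}"
      using finA by (auto simp: card_Diff_subset)
    have "card (S' \<union> A) = m" if "S' \<subseteq> W - A" "card S' = m - card A" for S'
      using that m finA fin finite_subset[of S' W]
      by (subst card_Un_disjoint) auto
    then show "(\<lambda>S'. S' \<union> A) ` {S'. S' \<subseteq> W - A \<and> card S' = m - card A} \<subseteq> {S. A \<subseteq> S \<and> S \<subseteq> W \<and> card S = m}"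
      using AW by auto
  qed auto
  then have "card {S. A \<subseteq> S \<and> S \<subseteq> W \<and> card S = m} = card {S'. S' \<subseteq> W - A \<and> card S' = m - card A}"
    by (rule bij_betw_same_card)
  also have "\<dots> = card (W - A) choose (m - card A)" using fin by (simp add: n_subsets)
  finally show ?thesis using AW finA by (simp add: card_Diff_subset)
qed

lemma card_root_splits:
  assumes fin: "finite V" and x: "x \<in> V" and km: "k \<le> m"
  shows "card (root_splits V x k l m)
    = (card {v\<in>V. v < x} choose k) * (card {v\<in>V. x < v} choose l) * ((card V - 1 - l - k) choose (m - k))"
proof -
  define Ls where "Ls = {Cs. Cs \<subseteq> {v\<in>V. v < x} \<and> card Cs = k}"
  define Us where "Us = {Cl. Cl \<subseteq> {v\<in>V. x < v} \<and> card Cl = l}"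
  define Ss where "Ss Cs Cl = {S. Cs \<subseteq> S \<and> S \<subseteq> V - {x} - Cl \<and> card S = m}" for Cs Cl
  have eq: "root_splits V x k l m = (SIGMA Cs:Ls. SIGMA Cl:Us. Ss Cs Cl)"
    unfolding root_splits_def Ls_def Us_def Ss_def by auto
  have card_Ss: "card (Ss Cs Cl) = (card V - 1 - l - k) choose (m - k)" if "Cs \<in> Ls" "Cl \<in> Us" for Cs Cl
  proof -
    have "Cl \<subseteq> V - {x}" "card Cl = l" using that(2) unfolding Us_def by auto
    then have "card (V - {x} - Cl) = card (V - {x}) - l"
      using fin by (metis card_Diff_subset finite_Diff finite_subset)
    then have "card (V - {x} - Cl) = card V - 1 - l" using fin x by simp
    moreover have "Cs \<subseteq> V - {x} - Cl" "card Cs = k" using that unfolding Ls_def Us_def by fastforce+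
    ultimately show ?thesis unfolding Ss_def using card_supersets[of "V - {x} - Cl" Cs m] fin km by simp
  qed
  have fins: "finite Ls" "finite Us" "finite (Ss Cs Cl)" for Cs Cl
    unfolding Ls_def Us_def Ss_def using fin by (auto intro: finite_subset[of _ "Pow V"])
  have "card (root_splits V x k l m) = card Ls * card Us * ((card V - 1 - l - k) choose (m - k))"
    unfolding eq using fins by (simp add: card_SigmaI card_Ss)
  moreover have "card Ls = card {v\<in>V. v < x} choose k" "card Us = card {v\<in>V. x < v} choose l"
    unfolding Ls_def Us_def using fin by (simp_all add: n_subsets)
  ultimately show ?thesis by simp
qed

lemma card_split_trees:
  assumes fin: "finite V" and x: "x \<in> V" and CsS: "Cs \<subseteq> S" and SV: "S \<subseteq> V - {x} - Cl"
    and ClV: "Cl \<subseteq> V - {x}"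
  shows "real (card (split_trees V x Cs Cl S))
           = phi (card S) (card Cs) * phi (card V - 1 - card S) (card Cl)"
proof -
  have finS: "finite S" and xS: "x \<notin> S" using SV fin by (auto intro: finite_subset)
  have "real (card (rooted_trees (insert x S) x Cs)) = phi (card S) (card Cs)"
    using card_rooted_trees[of "insert x S" x Cs] CsS finS xS by auto
  moreover have "real (card (rooted_trees (V - S) x Cl)) = phi (card V - 1 - card S) (card Cl)"
  proof -
    have "card (V - S) = card V - card S" using card_Diff_subset[OF finS, of V] SV by auto
    then show ?thesis using card_rooted_trees[of "V - S" x Cl] SV ClV fin x xS by auto
  qed
  ultimately show ?thesis
    using bij_betw_same_card[OF split_trees_bij[OF x CsS SV]] by (simp add: card_cartesian_product)
qed

theorem card_trees_by_root_split:
  assumes fin: "finite V" and x: "x \<in> V"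
  shows "real (card {E. is_tree V E \<and> card (lower_children E x) = k \<and> card (upper_children E x) = l
                        \<and> card (hanging_vertices E x (lower_children E x)) = m})
    = real (card (root_splits V x k l m)) * phi m k * phi (card V - 1 - m) l"
proof -
  let ?A = "{E. is_tree V E \<and> card (lower_children E x) = k \<and> card (upper_children E x) = l
                \<and> card (hanging_vertices E x (lower_children E x)) = m}"
  have finR: "finite (root_splits V x k l m)"
    by (rule finite_subset[of _ "Pow V \<times> Pow V \<times> Pow V"]) (use fin in \<open>auto simp: root_splits_def\<close>)
  have "card ?A = (\<Sum>q\<in>root_splits V x k l m. card {E\<in>?A. root_split E x = q})"
    unfolding card_eq_sum
    by (rule sum.group[symmetric])
      (use fin finR root_split_in_root_splits in \<open>auto intro: finite_subset[OF _ finite_trees]\<close>)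
  also have "\<dots> = (\<Sum>(Cs, Cl, S)\<in>root_splits V x k l m. card (split_trees V x Cs Cl S))"
  proof (rule sum.cong[OF refl], clarify)
    fix Cs Cl S assume q: "(Cs, Cl, S) \<in> root_splits V x k l m"
    then have "{E\<in>?A. root_split E x = (Cs, Cl, S)} = {E. is_tree V E \<and> root_split E x = (Cs, Cl, S)}"
      unfolding root_split_def root_splits_def by auto
    then show "card {E\<in>?A. root_split E x = (Cs, Cl, S)} = card (split_trees V x Cs Cl S)"
      using root_split_fibre[OF q] by simp
  qed
  finally have "real (card ?A) = (\<Sum>(Cs, Cl, S)\<in>root_splits V x k l m. real (card (split_trees V x Cs Cl S)))"
    by (simp add: case_prod_beta)
  also have "\<dots> = (\<Sum>q\<in>root_splits V x k l m. phi m k * phi (card V - 1 - m) l)"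
  proof (rule sum.cong[OF refl], clarify)
    fix Cs Cl S assume "(Cs, Cl, S) \<in> root_splits V x k l m"
    then have "Cs \<subseteq> S" "S \<subseteq> V - {x} - Cl" "Cl \<subseteq> V - {x}" "card Cs = k" "card Cl = l" "card S = m"
      unfolding root_splits_def by auto
    then show "real (card (split_trees V x Cs Cl S)) = phi m k * phi (card V - 1 - m) l"
      using card_split_trees[OF fin x] by simp
  qed
  finally show ?thesis by simp
qed

lemma upper_vandermonde: "(\<Sum>i\<le>n. (i choose k) * ((n - i) choose l)) = Suc n choose (k + l + 1)"
proof (induction n arbitrary: l)
  case 0
  then show ?case by (cases k; cases l) auto
next
  case (Suc n)
  show ?case
  proof (cases l)
    case 0
    then show ?thesis using sum_choose_upper[of k "Suc n"] by (simp del: sum.atMost_Suc)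
  next
    case (Suc l')
    have "(\<Sum>i\<le>Suc n. (i choose k) * ((Suc n - i) choose l))
        = (\<Sum>i\<le>n. (i choose k) * ((n - i) choose l') + (i choose k) * ((n - i) choose l))"
      using Suc by (simp add: Suc_diff_le algebra_simps)
    also have "\<dots> = (Suc n choose (k + l' + 1)) + (Suc n choose (k + l + 1))"
      by (simp add: sum.distrib Suc.IH)
    also have "\<dots> = Suc (Suc n) choose (k + l + 1)" using Suc by simp
    finally show ?thesis .
  qed
qed

lemma upper_vandermonde_shifted:
  "(\<Sum>i=1..n+1. ((i - 1) choose k) * ((n + 1 - i) choose l)) = (n + 1) choose (k + l + 1)"
proof -
  have "(\<Sum>i=1..n+1. ((i - 1) choose k) * ((n + 1 - i) choose l))
      = (\<Sum>i=0..n. (i choose k) * ((n - i) choose l))"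
    using sum.shift_bounds_cl_Suc_ivl[of "\<lambda>i. ((i - 1) choose k) * ((n + 1 - i) choose l)" 0 n]
    by simp
  then show ?thesis using upper_vandermonde by (simp add: atMost_atLeast0)
qed

lemma T_formula:
  assumes "i \<in> {1..n+1}" "k \<le> m"
  shows "real (T n i k l m)
    = real (((i - 1) choose k) * ((n + 1 - i) choose l) * ((n - k - l) choose (m - k))) * phi m k * phi (n - m) l"
proof -
  have "{v\<in>{1..n+1}. v < i} = {1..<i}" "{v\<in>{1..n+1}. i < v} = {i<..n+1}"
    using assms(1) by auto
  then have "card {v\<in>{1..n+1}. v < i} = i - 1" "card {v\<in>{1..n+1}. i < v} = n + 1 - i"
    by simp_all
  moreover have "T n i k l m = card {E. is_tree {1..n+1} E \<and> card (lower_children E i) = k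
      \<and> card (upper_children E i) = l \<and> card (hanging_vertices E i (lower_children E i)) = m}"
    unfolding T_def lower_children_def upper_children_def ..
  ultimately show ?thesis
    using card_trees_by_root_split[of "{1..n+1}" i k l m] card_root_splits[of "{1..n+1}" i k m l] assms
    by (simp add: diff_diff_left add.commute)
qed

theorem mainTheorem3:
  fixes n k l m :: nat
  assumes "n \<ge> 1" "k \<le> n" "l \<le> n - k" "k \<le> m" "m \<le> n - l"
  shows "real (\<Sum>i=1..n+1. T n i k l m)
           = real ((n+1) choose (k+l+1)) * real ((n-k-l) choose (m-k)) * phi m k * phi (n-m) l"
proof -
  have "real (\<Sum>i=1..n+1. T n i k l m)
      = (\<Sum>i=1..n+1. real (((i - 1) choose k) * ((n + 1 - i) choose l)))
          * (real ((n - k - l) choose (m - k)) * phi m k * phi (n - m) l)"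
    unfolding of_nat_sum sum_distrib_right
    by (rule sum.cong[OF refl]) (simp add: T_formula assms(4))
  also have "(\<Sum>i=1..n+1. real (((i - 1) choose k) * ((n + 1 - i) choose l))) = real ((n+1) choose (k+l+1))"
    unfolding of_nat_sum[symmetric] upper_vandermonde_shifted ..
  finally show ?thesis by (simp add: algebra_simps)
qed

end
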